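(* Let $A\in\mathbb{R}^{n\times n}$, let $W\in\mathbb{R}^{n\times n}$ be symmetric positive definite, let $C=\mathrm{diag}(C_{11},\dots,C_{nn})$ be diagonal positive definite and $V=\mathrm{diag}(\sigma_1^2,\dots,\sigma_n^2)$ with $\sigma_j>0$. Let $\Sigma$ be the unique positive semidefinite solution of $\Sigma=A\Sigma A^T-A\Sigma C^T(C\Sigma C^T+V)^{-1}C\Sigma A^T+W$ and let $\overline\Sigma=\Sigma-\Sigma C^T(C\Sigma C^T+V)^{-1}C\Sigma=(C^TV^{-1}C+\Sigma^{-1})^{-1}$ be the a posteriori Kalman filter error covariance. Then $$n\ln\left(\frac{\sigma_u^2}{C_u^2+\sigma_u^2\lambda_n^{-1}(W)}\right)\le\ln\det\overline\Sigma\le n\ln\left(\frac{\sigma_l^2}{C_l^2}\right).$$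
   Context: $\lambda_n(\cdot)$ denotes the smallest eigenvalue. The indices $l,u$ are defined by $l=\arg\min_{1\le j\le n}C_{jj}^2/\sigma_j^2$ and $u=\arg\max_{1\le j\le n}C_{jj}^2/\sigma_j^2$, with $C_l:=C_{ll}$, $C_u:=C_{uu}$. *)

theory Defs
  imports "HOL-Analysis.Analysis"
begin

definition diag_mat :: "real^'n \<Rightarrow> real^'n^'n" where
  "diag_mat d = (\<chi> i j. if i = j then d $ i else 0)"

definition symmetric_mat :: "real^'n^'n \<Rightarrow> bool" where
  "symmetric_mat M \<longleftrightarrow> transpose M = M"

definition pos_def :: "real^'n^'n \<Rightarrow> bool" where
  "pos_def M \<longleftrightarrow> symmetric_mat M \<and> (\<forall>x. x \<noteq> 0 \<longrightarrow> x \<bullet> (M *v x) > 0)"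

definition pos_semidef :: "real^'n^'n \<Rightarrow> bool" where
  "pos_semidef M \<longleftrightarrow> symmetric_mat M \<and> (\<forall>x. x \<bullet> (M *v x) \<ge> 0)"

definition is_eigenvalue :: "real^'n^'n \<Rightarrow> real \<Rightarrow> bool" where
  "is_eigenvalue M mu \<longleftrightarrow> (\<exists>x. x \<noteq> 0 \<and> M *v x = mu *s x)"

definition min_eigenvalue :: "real^'n^'n \<Rightarrow> real" where
  "min_eigenvalue M = Min {mu. is_eigenvalue M mu}"

end

theory Submission
  imports Defs
begin

text \<open>
  Since \<open>\<Sigma>bar\<close> is symmetric positive semidefinite, its determinant is the product of its
  eigenvalues, so it suffices to bound every eigenvalue \<open>\<mu>\<close>. With
  \<open>D = C\<^sup>T V\<^sup>-\<^sup>1 C = diag (C\<^sub>j\<^sub>j\<^sup>2 / \<sigma>\<^sub>j\<^sup>2)\<close>, an eigenvector \<open>x\<close> of \<open>\<Sigma>bar\<close> satisfies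
  \<open>\<Sigma> y = \<mu> x\<close> for \<open>y = x - \<mu> D x\<close>. Positivity of \<open>\<Sigma>\<close> gives \<open>y \<bullet> x \<ge> 0\<close>, i.e.
  \<open>\<mu> \<le> \<sigma>\<^sub>l\<^sup>2 / C\<^sub>l\<^sup>2\<close>. The Riccati equation reads \<open>\<Sigma> = A \<Sigma>bar A\<^sup>T + W\<close>, so
  \<open>\<Sigma> \<ge> W \<ge> \<lambda>\<^sub>n(W) I\<close>; together with Cauchy-Schwarz this gives
  \<open>y \<bullet> x \<le> \<mu> |x|\<^sup>2 / \<lambda>\<^sub>n(W)\<close>, i.e. \<open>\<mu> \<ge> \<sigma>\<^sub>u\<^sup>2 / (C\<^sub>u\<^sup>2 + \<sigma>\<^sub>u\<^sup>2 / \<lambda>\<^sub>n(W))\<close>.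
\<close>

section \<open>Spectral theorem for real symmetric matrices\<close>

lemma symmetric_mat_inner_commute:
  fixes S :: "real^'n^'n"
  assumes "symmetric_mat S"
  shows "(S *v x) \<bullet> y = x \<bullet> (S *v y)"
  by (metis assms symmetric_mat_def dot_lmul_matrix inner_commute vector_transpose_matrix)

lemma nonpos_if_linear_le_quadratic:
  fixes a b :: real
  assumes "\<And>t. 0 < t \<Longrightarrow> t * a \<le> t\<^sup>2 * b"
  shows "a \<le> 0"
proof (rule ccontr)
  assume "\<not> a \<le> 0"
  define t where "t = a / (\<bar>b\<bar> + 1)"
  have "0 < t" using \<open>\<not> a \<le> 0\<close> by (simp add: t_def)
  then have "a \<le> t * b" using assms[of t] by (simp add: power2_eq_square)
  also have "\<dots> < a" using \<open>\<not> a \<le> 0\<close> by (simp add: t_def field_simps abs_if split: if_splits)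
  finally show False by simp
qed

lemma rayleigh_maximizer_is_eigenvector:
  fixes S :: "real^'n^'n"
  assumes S: "symmetric_mat S" and U: "subspace U" "x \<in> U" "S *v x \<in> U"
    and x: "x \<bullet> x = 1" and max: "\<And>y. y \<in> U \<Longrightarrow> y \<bullet> (S *v y) \<le> (x \<bullet> (S *v x)) * (y \<bullet> y)"
  shows "S *v x = (x \<bullet> (S *v x)) *s x"
proof -
  define \<mu> where "\<mu> = x \<bullet> (S *v x)"
  define r where "r = S *v x - \<mu> *\<^sub>R x"
  have "r \<in> U" using U by (simp add: r_def subspace_diff subspace_scale)
  have rx: "r \<bullet> x = 0" using x by (simp add: r_def \<mu>_def inner_diff_left inner_commute inner_diff_right)
  have rSx: "r \<bullet> (S *v x) = r \<bullet> r"
    using rx by (simp add: r_def inner_diff_right inner_commute)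
  have "t * (2 * (r \<bullet> r)) \<le> t\<^sup>2 * (\<mu> * (r \<bullet> r) - r \<bullet> (S *v r))" for t
  proof -
    have "(x + t *\<^sub>R r) \<bullet> (S *v (x + t *\<^sub>R r)) \<le> \<mu> * ((x + t *\<^sub>R r) \<bullet> (x + t *\<^sub>R r))"
      using max \<open>r \<in> U\<close> U by (simp add: \<mu>_def subspace_add subspace_scale)
    moreover have "x \<bullet> (S *v r) = r \<bullet> (S *v x)"
      using symmetric_mat_inner_commute[OF S, of r x] by (simp add: inner_commute)
    ultimately show ?thesis
      using x rx rSx
      by (simp add: matrix_vector_right_distrib matrix_vector_mult_scaleR inner_add_left inner_add_right
          inner_commute \<mu>_def algebra_simps power2_eq_square)
  qed
  then have "2 * (r \<bullet> r) \<le> 0" by (intro nonpos_if_linear_le_quadratic)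
  then have "r = 0" by (metis inner_gt_zero_iff mult_pos_pos not_le zero_less_numeral)
  then show ?thesis by (simp add: r_def \<mu>_def scalar_mult_eq_scaleR)
qed

lemma rayleigh_quotient_attains_max:
  fixes S :: "real^'n^'n"
  assumes U: "subspace U" "a \<in> U" "a \<noteq> 0"
  obtains x where "x \<in> U" "x \<bullet> x = 1" "\<And>y. y \<in> U \<Longrightarrow> y \<bullet> (S *v y) \<le> (x \<bullet> (S *v x)) * (y \<bullet> y)"
proof -
  have "a /\<^sub>R norm a \<in> sphere 0 1 \<inter> U" using U by (simp add: subspace_scale)
  then have K_ne: "sphere 0 1 \<inter> U \<noteq> {}" by blast
  have K_compact: "compact (sphere (0::real^'n) 1 \<inter> U)"
    by (intro compact_Int_closed compact_sphere closed_subspace U(1))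
  have q_cont: "continuous_on (sphere 0 1 \<inter> U) (\<lambda>z. z \<bullet> (S *v z))"
    by (intro continuous_intros)
  obtain x where x: "x \<in> sphere 0 1 \<inter> U"
    and max: "\<And>z. z \<in> sphere 0 1 \<inter> U \<Longrightarrow> z \<bullet> (S *v z) \<le> x \<bullet> (S *v x)"
    using continuous_attains_sup[OF K_compact K_ne q_cont] by blast
  have "y \<bullet> (S *v y) \<le> (x \<bullet> (S *v x)) * (y \<bullet> y)" if "y \<in> U" for y
  proof (cases "y = 0")
    case False
    then have "y /\<^sub>R norm y \<in> sphere 0 1 \<inter> U"
      using \<open>y \<in> U\<close> U(1) by (simp add: subspace_scale)
    from max[OF this] have "(y \<bullet> (S *v y)) / (norm y)\<^sup>2 \<le> x \<bullet> (S *v x)"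
      by (simp add: matrix_vector_mult_scaleR power2_eq_square divide_inverse mult_ac)
    then show ?thesis
      using False by (simp add: pos_divide_le_eq dot_square_norm)
  qed simp
  then show thesis using that x by (auto simp: dot_square_norm)
qed

lemma symmetric_mat_eigenvector_orthogonal:
  fixes S :: "real^'n^'n"
  assumes S: "symmetric_mat S" and B: "finite B" "card B < CARD('n)"
    and eigen: "\<And>b. b \<in> B \<Longrightarrow> \<exists>\<mu>. S *v b = \<mu> *s b"
  obtains x \<mu> where "norm x = 1" "\<forall>b\<in>B. orthogonal x b" "S *v x = \<mu> *s x"
proof -
  define U where "U = {y. \<forall>b\<in>B. orthogonal y b}"
  have "subspace U" by (auto simp: U_def subspace_def orthogonal_clauses)
  have SU: "S *v y \<in> U" if "y \<in> U" for y
  proof -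
    have "orthogonal (S *v y) b" if "b \<in> B" for b
    proof -
      obtain \<mu> where "S *v b = \<mu> *s b" using eigen \<open>b \<in> B\<close> by blast
      then have "(S *v y) \<bullet> b = \<mu> * (y \<bullet> b)"
        by (simp add: symmetric_mat_inner_commute[OF S, symmetric] inner_commute scalar_mult_eq_scaleR)
      then show ?thesis using \<open>y \<in> U\<close> \<open>b \<in> B\<close> by (simp add: U_def orthogonal_def)
    qed
    then show ?thesis by (simp add: U_def)
  qed
  have "span B \<noteq> UNIV"
  proof
    assume "span B = UNIV"
    then have "dim B = dim (UNIV :: (real^'n) set)" by (metis dim_span)
    then show False using B dim_le_card'[of B] by simp
  qed
  then obtain a :: "real^'n" where "a \<noteq> 0" "\<forall>y\<in>span B. a \<bullet> y = 0"
    using span_not_UNIV_orthogonal by blast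
  then have "a \<in> U" by (auto simp: U_def orthogonal_def span_base inner_commute)
  then obtain x where "x \<in> U" "x \<bullet> x = 1"
    and "\<And>y. y \<in> U \<Longrightarrow> y \<bullet> (S *v y) \<le> (x \<bullet> (S *v x)) * (y \<bullet> y)"
    using rayleigh_quotient_attains_max[OF \<open>subspace U\<close> _ \<open>a \<noteq> 0\<close>] by blast
  then have "S *v x = (x \<bullet> (S *v x)) *s x"
    using SU \<open>subspace U\<close> by (intro rayleigh_maximizer_is_eigenvector[OF S]) auto
  then show thesis using that \<open>x \<in> U\<close> \<open>x \<bullet> x = 1\<close> by (auto simp: U_def norm_eq_1)
qed

lemma symmetric_mat_orthonormal_eigenvectors:
  fixes S :: "real^'n^'n"
  assumes S: "symmetric_mat S"
  shows "k \<le> CARD('n) \<Longrightarrow> \<exists>B. finite B \<and> card B = k \<and> pairwise orthogonal B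
           \<and> (\<forall>b\<in>B. norm b = 1 \<and> (\<exists>\<mu>. S *v b = \<mu> *s b))"
proof (induction k)
  case (Suc k)
  then obtain B where B: "finite B" "card B = k" "pairwise orthogonal B"
    and eigen: "\<forall>b\<in>B. norm b = 1 \<and> (\<exists>\<mu>. S *v b = \<mu> *s b)"
    by auto
  obtain x \<mu> where x: "norm x = 1" "\<forall>b\<in>B. orthogonal x b" "S *v x = \<mu> *s x"
    using symmetric_mat_eigenvector_orthogonal[OF S B(1)] B(2) Suc.prems eigen by auto
  then have "x \<notin> B" by (auto simp: orthogonal_def)
  then show ?case
    using B eigen x by (intro exI[of _ "insert x B"]) (auto simp: pairwise_insert orthogonal_commute)
qed auto

lemma symmetric_mat_orthogonal_diagonalization:
  fixes S :: "real^'n^'n"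
  assumes S: "symmetric_mat S"
  obtains Q e where "orthogonal_matrix Q" "S ** Q = Q ** diag_mat e"
proof -
  obtain B where B: "finite B" "card B = CARD('n)" "pairwise orthogonal B"
    and eigen: "\<forall>b\<in>B. norm b = 1 \<and> (\<exists>\<mu>. S *v b = \<mu> *s b)"
    using symmetric_mat_orthonormal_eigenvectors[OF S] by blast
  obtain h where h: "bij_betw h (UNIV :: 'n set) B"
    using finite_same_card_bij[of "UNIV :: 'n set" B] B by auto
  then have hB: "h j \<in> B" for j by (auto simp: bij_betw_def)
  define Q where "Q = (\<chi> i j. h j $ i)"
  define e where "e = (\<chi> j. SOME \<mu>. S *v h j = \<mu> *s h j)"
  have column: "column j Q = h j" for j by (simp add: Q_def column_def vec_eq_iff)
  have "orthogonal_matrix Q"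
    unfolding orthogonal_matrix_orthonormal_columns column
    using B(3) eigen hB h by (auto simp: pairwise_def bij_betw_def inj_eq)
  moreover have "S *v h j = e $ j *s h j" for j
    unfolding e_def vec_lambda_beta by (rule someI_ex) (use eigen hB in blast)
  then have "S ** Q = Q ** diag_mat e"
    by (simp add: vec_eq_iff matrix_matrix_mult_def matrix_vector_mult_def Q_def diag_mat_def
        mult.commute if_distrib[where f = "\<lambda>z. _ * z"] cong: if_cong)
  ultimately show thesis using that by blast
qed

lemma diag_mat_vector_nth: "(diag_mat d *v x) $ j = d $ j * x $ j"
  by (simp add: matrix_vector_mult_def diag_mat_def if_distrib[where f = "\<lambda>z. z * _"] cong: if_cong)

lemma transpose_diag_mat: "transpose (diag_mat d) = diag_mat d"
  by (simp add: vec_eq_iff transpose_def diag_mat_def)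

lemma inner_diag_mat: "x \<bullet> (diag_mat d *v x) = (\<Sum>j\<in>UNIV. d $ j * (x $ j)\<^sup>2)"
  by (simp add: inner_vec_def diag_mat_vector_nth power2_eq_square mult_ac)

lemma inner_diag_mat_ge: "(\<And>j. a \<le> d $ j) \<Longrightarrow> a * (x \<bullet> x) \<le> x \<bullet> (diag_mat d *v x)"
  unfolding inner_diag_mat by (simp add: inner_vec_def sum_distrib_left power2_eq_square sum_mono mult_right_mono)

lemma inner_diag_mat_le: "(\<And>j. d $ j \<le> b) \<Longrightarrow> x \<bullet> (diag_mat d *v x) \<le> b * (x \<bullet> x)"
  unfolding inner_diag_mat by (simp add: inner_vec_def sum_distrib_left power2_eq_square sum_mono mult_right_mono)

lemma orthogonal_matrix_inner:
  fixes Q :: "real^'n^'n"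
  assumes "orthogonal_matrix Q"
  shows "(Q *v x) \<bullet> (Q *v y) = x \<bullet> y"
  by (metis assms dot_lmul_matrix matrix_vector_mul_assoc matrix_vector_mul_lid orthogonal_matrix
      vector_transpose_matrix)

lemma orthogonal_matrix_mult_transpose_vector:
  "orthogonal_matrix Q \<Longrightarrow> Q *v (transpose Q *v x) = x"
  by (simp only: matrix_vector_mul_assoc) (simp add: orthogonal_matrix_def)

context
  fixes S Q :: "real^'n^'n" and e :: "real^'n"
  assumes Q: "orthogonal_matrix Q" and SQ: "S ** Q = Q ** diag_mat e"
begin

lemma det_eq_prod_of_diagonalization: "det S = (\<Prod>j\<in>UNIV. e $ j)"
proof -
  have "det S * det Q = det Q * (\<Prod>j\<in>UNIV. e $ j)"
    using arg_cong[OF SQ, of det] by (simp add: det_mul det_diagonal diag_mat_def)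
  moreover have "det Q \<noteq> 0" using det_orthogonal_matrix[OF Q] by auto
  ultimately show ?thesis by simp
qed

lemma eigenvalues_of_diagonalization: "{\<mu>. is_eigenvalue S \<mu>} = range (($) e)"
proof (intro equalityI subsetI)
  fix \<mu> assume "\<mu> \<in> {\<mu>. is_eigenvalue S \<mu>}"
  then obtain x where "x \<noteq> 0" and x: "S *v x = \<mu> *s x" by (auto simp: is_eigenvalue_def)
  obtain y where xy: "x = Q *v y" using orthogonal_matrix_mult_transpose_vector[OF Q] by metis
  then obtain i where "y $ i \<noteq> 0" using \<open>x \<noteq> 0\<close> by (metis matrix_vector_mult_0_right vec_eq_iff zero_index)
  have QTQ: "transpose Q *v (Q *v z) = z" for z
    using orthogonal_matrix_mult_transpose_vector[of "transpose Q"] Q by simp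
  have "S *v (Q *v y) = Q *v (diag_mat e *v y)" by (simp add: matrix_vector_mul_assoc SQ)
  then have "diag_mat e *v y = transpose Q *v (S *v (Q *v y))" by (simp only: QTQ)
  also have "\<dots> = \<mu> *s y" by (simp only: xy[symmetric] x vector_scalar_commute) (simp only: xy QTQ)
  finally have "e $ i * y $ i = \<mu> * y $ i" by (metis diag_mat_vector_nth vector_smult_component)
  then show "\<mu> \<in> range (($) e)" using \<open>y $ i \<noteq> 0\<close> by (auto simp: image_iff)
next
  fix \<mu> assume "\<mu> \<in> range (($) e)"
  then obtain j where "\<mu> = e $ j" by blast
  have "Q *v axis j 1 \<noteq> 0"
    using orthogonal_matrix_inner[OF Q, of "axis j 1" "axis j 1"] by (auto simp: axis_eq_0_iff)
  have "diag_mat e *v axis j 1 = \<mu> *s axis j 1"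
    by (simp add: vec_eq_iff diag_mat_vector_nth axis_def \<open>\<mu> = e $ j\<close>)
  moreover have "S *v (Q *v axis j 1) = Q *v (diag_mat e *v axis j 1)"
    by (simp add: matrix_vector_mul_assoc SQ)
  ultimately have "S *v (Q *v axis j 1) = \<mu> *s (Q *v axis j 1)" by (simp add: vector_scalar_commute)
  with \<open>Q *v axis j 1 \<noteq> 0\<close> show "\<mu> \<in> {\<mu>. is_eigenvalue S \<mu>}"
    by (auto simp: is_eigenvalue_def)
qed

lemma quadratic_form_ge_of_diagonalization:
  assumes "\<And>j. a \<le> e $ j"
  shows "a * (x \<bullet> x) \<le> x \<bullet> (S *v x)"
proof -
  obtain y where x: "x = Q *v y" using orthogonal_matrix_mult_transpose_vector[OF Q] by metis
  have "S *v x = Q *v (diag_mat e *v y)" by (simp add: x matrix_vector_mul_assoc SQ)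
  then show ?thesis
    using inner_diag_mat_ge[of a e y] assms by (simp add: x orthogonal_matrix_inner[OF Q])
qed

end

lemma min_eigenvalue_le_quadratic_form:
  fixes S :: "real^'n^'n"
  assumes "symmetric_mat S"
  shows "min_eigenvalue S * (x \<bullet> x) \<le> x \<bullet> (S *v x)"
proof -
  obtain Q e where Q: "orthogonal_matrix Q" "S ** Q = Q ** diag_mat e"
    using symmetric_mat_orthogonal_diagonalization[OF assms] .
  then have "min_eigenvalue S = Min (range (($) e))"
    by (simp add: min_eigenvalue_def eigenvalues_of_diagonalization)
  then show ?thesis by (intro quadratic_form_ge_of_diagonalization[OF Q]) simp
qed

lemma min_eigenvalue_is_eigenvalue:
  fixes S :: "real^'n^'n"
  assumes "symmetric_mat S"
  shows "is_eigenvalue S (min_eigenvalue S)"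
proof -
  obtain Q e where Q: "orthogonal_matrix Q" "S ** Q = Q ** diag_mat e"
    using symmetric_mat_orthogonal_diagonalization[OF assms] .
  have "Min (range (($) e)) \<in> range (($) e)" by (intro Min_in) auto
  then show ?thesis using eigenvalues_of_diagonalization[OF Q] by (metis mem_Collect_eq min_eigenvalue_def)
qed

lemma pos_def_eigenvalue_pos:
  assumes "pos_def S" "is_eigenvalue S \<mu>"
  shows "0 < \<mu>"
proof -
  obtain x where "x \<noteq> 0" "S *v x = \<mu> *s x" using assms(2) by (auto simp: is_eigenvalue_def)
  then have "0 < \<mu> * (x \<bullet> x)" using assms(1) by (auto simp: pos_def_def scalar_mult_eq_scaleR)
  then show ?thesis using inner_ge_zero[of x] by (auto simp: zero_less_mult_iff)
qed

lemma pos_def_min_eigenvalue_pos: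
  assumes "pos_def S"
  shows "0 < min_eigenvalue S"
  using assms by (intro pos_def_eigenvalue_pos[OF assms] min_eigenvalue_is_eigenvalue) (simp add: pos_def_def)

lemma det_bounds_of_eigenvalue_bounds:
  fixes S :: "real^'n^'n"
  assumes "symmetric_mat S" "0 \<le> a" "\<And>\<mu>. is_eigenvalue S \<mu> \<Longrightarrow> a \<le> \<mu> \<and> \<mu> \<le> b"
  shows "a ^ CARD('n) \<le> det S \<and> det S \<le> b ^ CARD('n)"
proof -
  obtain Q e where Q: "orthogonal_matrix Q" "S ** Q = Q ** diag_mat e"
    using symmetric_mat_orthogonal_diagonalization[OF assms(1)] .
  have "a \<le> e $ j \<and> e $ j \<le> b" for j
    using assms(3) eigenvalues_of_diagonalization[OF Q] by blast
  then show ?thesis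
    using assms(2) unfolding det_eq_prod_of_diagonalization[OF Q]
    by (auto simp flip: prod_constant intro!: prod_mono intro: order_trans[OF assms(2)])
qed

section \<open>The a posteriori error covariance of the Kalman filter\<close>

definition posterior_cov :: "real^'n^'n \<Rightarrow> real^'n^'m \<Rightarrow> real^'m^'m \<Rightarrow> real^'n^'n" where
  "posterior_cov \<Sigma> C V = \<Sigma> - \<Sigma> ** transpose C ** matrix_inv (C ** \<Sigma> ** transpose C + V) ** C ** \<Sigma>"

lemma matrix_inv_left_right:
  fixes A :: "'a::semiring_1^'n^'m"
  assumes "invertible A"
  shows "A ** matrix_inv A = mat 1 \<and> matrix_inv A ** A = mat 1"
  using someI_ex[OF assms[unfolded invertible_def]] by (simp add: matrix_inv_def)

lemma pos_def_invertible:
  fixes M :: "real^'n^'n"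
  assumes "pos_def M"
  shows "invertible M"
proof -
  have "x = 0" if "M *v x = 0" for x
    using assms that by (auto simp: pos_def_def)
  then show ?thesis by (simp add: invertible_left_inverse matrix_left_invertible_ker)
qed

lemma pos_def_imp_pos_semidef: "pos_def M \<Longrightarrow> pos_semidef M"
  unfolding pos_def_def pos_semidef_def by (metis order.refl inner_zero_left less_imp_le)

lemma symmetric_mat_matrix_inv:
  fixes M :: "real^'n^'n"
  assumes "symmetric_mat M" "invertible M"
  shows "symmetric_mat (matrix_inv M)"
proof -
  have "transpose (matrix_inv M) ** M = mat 1"
    using matrix_inv_left_right[OF assms(2)] assms(1)
    by (metis matrix_transpose_mul symmetric_mat_def transpose_mat)
  have "transpose (matrix_inv M) = transpose (matrix_inv M) ** (M ** matrix_inv M)"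
    using matrix_inv_left_right[OF assms(2)] by simp
  also have "\<dots> = matrix_inv M"
    using \<open>transpose (matrix_inv M) ** M = mat 1\<close> by (metis matrix_mul_assoc matrix_mul_lid)
  finally show ?thesis by (simp add: symmetric_mat_def)
qed

lemma transpose_add: "transpose (A + B) = transpose A + transpose B"
  by (simp add: vec_eq_iff transpose_def)

lemma transpose_diff: "transpose (A - B) = transpose A - transpose B"
  by (simp add: vec_eq_iff transpose_def)

lemma matrix_diff_ldistrib: "A ** (B - C) = A ** B - A ** (C :: 'a::ring_1^_^_)"
  by (simp add: matrix_eq matrix_vector_mult_diff_rdistrib matrix_vector_mult_diff_distrib
      flip: matrix_vector_mul_assoc)

lemma matrix_diff_rdistrib: "(B - C) ** A = B ** A - C ** (A :: 'a::ring_1^_^_)"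
  by (simp add: matrix_eq matrix_vector_mult_diff_rdistrib matrix_vector_mult_diff_distrib
      flip: matrix_vector_mul_assoc)

lemma inner_matrix_vector_transpose: "x \<bullet> (C *v z) = (transpose C *v x) \<bullet> (z :: real^_)"
  by (simp add: dot_lmul_matrix)

lemma innovation_cov_pos_def:
  fixes \<Sigma> :: "real^'n^'n" and C :: "real^'n^'m"
  assumes "pos_semidef \<Sigma>" "pos_def V"
  shows "pos_def (C ** \<Sigma> ** transpose C + V)"
proof -
  have "x \<bullet> ((C ** \<Sigma> ** transpose C + V) *v x)
        = (transpose C *v x) \<bullet> (\<Sigma> *v (transpose C *v x)) + x \<bullet> (V *v x)" for x
    by (simp add: matrix_vector_mult_add_rdistrib inner_add_right inner_matrix_vector_transpose
        flip: matrix_vector_mul_assoc)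
  then show ?thesis
    using assms
    by (auto simp: pos_def_def pos_semidef_def symmetric_mat_def transpose_add matrix_transpose_mul
        matrix_mul_assoc intro: add_nonneg_pos)
qed

lemma posterior_cov_factor:
  fixes \<Sigma> :: "real^'n^'n" and C :: "real^'n^'m"
  assumes "invertible (C ** \<Sigma> ** transpose C + V)"
  obtains w where "posterior_cov \<Sigma> C V *v x = \<Sigma> *v (x - transpose C *v w)"
    and "V *v w = C *v (posterior_cov \<Sigma> C V *v x)"
proof
  define M where "M = C ** \<Sigma> ** transpose C + V"
  define w where "w = matrix_inv M *v (C *v (\<Sigma> *v x))"
  show Sb: "posterior_cov \<Sigma> C V *v x = \<Sigma> *v (x - transpose C *v w)"
    by (simp add: posterior_cov_def w_def M_def matrix_vector_mult_diff_rdistrib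
        matrix_vector_mult_diff_distrib matrix_vector_mul_assoc matrix_mul_assoc)
  have "M *v w = (M ** matrix_inv M) *v (C *v (\<Sigma> *v x))"
    unfolding w_def by (rule matrix_vector_mul_assoc)
  also have "\<dots> = C *v (\<Sigma> *v x)"
    using matrix_inv_left_right[OF assms] by (simp add: M_def)
  finally show "V *v w = C *v (posterior_cov \<Sigma> C V *v x)"
    by (simp add: Sb M_def matrix_vector_mult_add_rdistrib matrix_vector_mult_diff_distrib
        matrix_vector_mul_assoc matrix_mul_assoc algebra_simps del: transpose_matrix_vector)
qed

lemma posterior_cov_pos_semidef:
  fixes \<Sigma> :: "real^'n^'n" and C :: "real^'n^'m"
  assumes \<Sigma>: "pos_semidef \<Sigma>" and V: "pos_def V"
  shows "pos_semidef (posterior_cov \<Sigma> C V)"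
proof -
  let ?M = "C ** \<Sigma> ** transpose C + V"
  have "pos_def ?M" by (rule innovation_cov_pos_def[OF assms])
  then have M: "invertible ?M" "symmetric_mat ?M"
    using pos_def_invertible by (auto simp: pos_def_def)
  have "symmetric_mat (posterior_cov \<Sigma> C V)"
    using symmetric_mat_matrix_inv[OF M(2,1)] \<Sigma>
    by (simp add: posterior_cov_def symmetric_mat_def pos_semidef_def transpose_diff
        matrix_transpose_mul matrix_mul_assoc)
  moreover have "0 \<le> x \<bullet> (posterior_cov \<Sigma> C V *v x)" for x
  proof -
    obtain w where Sb: "posterior_cov \<Sigma> C V *v x = \<Sigma> *v (x - transpose C *v w)"
      and Vw: "V *v w = C *v (posterior_cov \<Sigma> C V *v x)"
      using posterior_cov_factor[OF M(1)] by blast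
    define v where "v = x - transpose C *v w"
    have x: "x = v + transpose C *v w" by (simp add: v_def)
    have "x \<bullet> (posterior_cov \<Sigma> C V *v x) = (v + transpose C *v w) \<bullet> (\<Sigma> *v v)"
      unfolding Sb v_def[symmetric] by (simp only: x)
    also have "\<dots> = v \<bullet> (\<Sigma> *v v) + w \<bullet> (C *v (\<Sigma> *v v))"
      by (simp only: inner_add_left inner_matrix_vector_transpose[of w C])
    also have "\<dots> = v \<bullet> (\<Sigma> *v v) + w \<bullet> (V *v w)"
      unfolding Vw Sb v_def ..
    finally show ?thesis
      using \<Sigma> pos_def_imp_pos_semidef[OF V] by (simp add: pos_semidef_def)
  qed
  ultimately show ?thesis by (simp add: pos_semidef_def)
qed

lemma riccati_posterior_form:
  fixes \<Sigma> A W :: "real^'n^'n" and C :: "real^'n^'m"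
  assumes "\<Sigma> = A ** \<Sigma> ** transpose A
      - A ** \<Sigma> ** transpose C ** matrix_inv (C ** \<Sigma> ** transpose C + V) ** C ** \<Sigma> ** transpose A + W"
  shows "\<Sigma> = A ** posterior_cov \<Sigma> C V ** transpose A + W"
  using assms by (simp add: posterior_cov_def matrix_diff_ldistrib matrix_diff_rdistrib matrix_mul_assoc)

lemma riccati_quadratic_form_ge:
  fixes \<Sigma> A W :: "real^'n^'n" and C :: "real^'n^'m"
  assumes "pos_semidef \<Sigma>" "pos_def V"
    and "\<Sigma> = A ** \<Sigma> ** transpose A
      - A ** \<Sigma> ** transpose C ** matrix_inv (C ** \<Sigma> ** transpose C + V) ** C ** \<Sigma> ** transpose A + W"
  shows "y \<bullet> (W *v y) \<le> y \<bullet> (\<Sigma> *v y)"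
proof -
  have "y \<bullet> (\<Sigma> *v y) = y \<bullet> ((A ** posterior_cov \<Sigma> C V ** transpose A + W) *v y)"
    using riccati_posterior_form[OF assms(3)] by simp
  also have "\<dots> = (transpose A *v y) \<bullet> (posterior_cov \<Sigma> C V *v (transpose A *v y)) + y \<bullet> (W *v y)"
    by (simp add: matrix_vector_mult_add_rdistrib inner_add_right inner_matrix_vector_transpose
        del: transpose_matrix_vector flip: matrix_vector_mul_assoc)
  finally show ?thesis
    using posterior_cov_pos_semidef[OF assms(1,2)] by (simp add: pos_semidef_def)
qed

lemma pos_def_diag_mat:
  assumes "\<And>j. 0 < d $ j"
  shows "pos_def (diag_mat d)"
proof -
  have m: "0 < Min (range (($) d))" using assms by (simp add: Min_gr_iff)
  have "0 < x \<bullet> (diag_mat d *v x)" if "x \<noteq> 0" for x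
    using mult_pos_pos[OF m, of "x \<bullet> x"] inner_diag_mat_ge[of "Min (range (($) d))" d x] that by simp
  then show ?thesis by (simp add: pos_def_def symmetric_mat_def transpose_diag_mat)
qed

lemma eigen_equation_upper_bound:
  fixes S D :: "real^'n^'n"
  assumes S: "\<And>y. 0 \<le> y \<bullet> (S *v y)" and eq: "S *v (x - \<mu> *s (D *v x)) = \<mu> *s x"
    and "0 \<le> \<mu>" "x \<noteq> 0" and D: "a * (x \<bullet> x) \<le> x \<bullet> (D *v x)"
  shows "\<mu> * a \<le> 1"
proof (cases "\<mu> = 0")
  case False
  define y where "y = x - \<mu> *s (D *v x)"
  have "0 \<le> \<mu> * (y \<bullet> x)"
    using S[of y] eq by (simp add: y_def scalar_mult_eq_scaleR inner_commute)
  then have "0 \<le> y \<bullet> x" using False \<open>0 \<le> \<mu>\<close> by (simp add: zero_le_mult_iff)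
  then have "\<mu> * (x \<bullet> (D *v x)) \<le> x \<bullet> x"
    by (simp add: y_def inner_diff_right scalar_mult_eq_scaleR inner_commute)
  moreover have "\<mu> * (a * (x \<bullet> x)) \<le> \<mu> * (x \<bullet> (D *v x))" using D \<open>0 \<le> \<mu>\<close> by (rule mult_left_mono)
  ultimately have "(\<mu> * a) * (x \<bullet> x) \<le> 1 * (x \<bullet> x)" by simp
  then show ?thesis using \<open>x \<noteq> 0\<close> by (simp add: mult_le_cancel_right)
qed simp

lemma eigen_equation_lower_bound:
  fixes S D :: "real^'n^'n"
  assumes S: "\<And>y. \<gamma> * (y \<bullet> y) \<le> y \<bullet> (S *v y)" and "0 < \<gamma>"
    and eq: "S *v (x - \<mu> *s (D *v x)) = \<mu> *s x"
    and "0 \<le> \<mu>" "x \<noteq> 0" and D: "x \<bullet> (D *v x) \<le> b * (x \<bullet> x)"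
  shows "1 \<le> \<mu> * (b + 1 / \<gamma>)"
proof -
  define y where "y = x - \<mu> *s (D *v x)"
  have "\<gamma> * (y \<bullet> y) \<le> \<mu> * (y \<bullet> x)"
    using S[of y] eq by (simp add: y_def scalar_mult_eq_scaleR inner_commute)
  have "\<gamma> * (y \<bullet> x) \<le> \<mu> * (x \<bullet> x)"
  proof (cases "y \<bullet> x \<le> 0")
    case False
    have "\<gamma> * (y \<bullet> x)\<^sup>2 \<le> \<gamma> * (y \<bullet> y) * (x \<bullet> x)"
      using Cauchy_Schwarz_ineq[of y x] \<open>0 < \<gamma>\<close> by (simp add: mult.assoc)
    also have "\<dots> \<le> \<mu> * (y \<bullet> x) * (x \<bullet> x)"
      using \<open>\<gamma> * (y \<bullet> y) \<le> \<mu> * (y \<bullet> x)\<close> by (simp add: mult_right_mono)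
    finally have "(\<gamma> * (y \<bullet> x)) * (y \<bullet> x) \<le> (\<mu> * (x \<bullet> x)) * (y \<bullet> x)"
      by (simp add: power2_eq_square mult_ac)
    then show ?thesis using False by simp
  next
    case True
    then have "\<gamma> * (y \<bullet> x) \<le> 0" using \<open>0 < \<gamma>\<close> by (simp add: mult_nonneg_nonpos)
    also have "0 \<le> \<mu> * (x \<bullet> x)" using \<open>0 \<le> \<mu>\<close> by simp
    finally show ?thesis .
  qed
  then have "y \<bullet> x \<le> \<mu> * (x \<bullet> x) / \<gamma>"
    using \<open>0 < \<gamma>\<close> by (simp add: pos_le_divide_eq mult.commute)
  moreover have "y \<bullet> x = x \<bullet> x - \<mu> * (x \<bullet> (D *v x))"
    by (simp add: y_def inner_diff_right scalar_mult_eq_scaleR inner_commute)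
  moreover have "\<mu> * (x \<bullet> (D *v x)) \<le> \<mu> * (b * (x \<bullet> x))" using D \<open>0 \<le> \<mu>\<close> by (rule mult_left_mono)
  ultimately have "1 * (x \<bullet> x) \<le> (\<mu> * (b + 1 / \<gamma>)) * (x \<bullet> x)"
    by (simp add: algebra_simps)
  then show ?thesis using \<open>x \<noteq> 0\<close> by (simp add: mult_le_cancel_right)
qed

lemma posterior_cov_diag_eigen_equation:
  fixes \<Sigma> :: "real^'n^'n" and c s :: "real^'n"
  assumes \<Sigma>: "pos_semidef \<Sigma>" and s: "\<And>j. 0 < s $ j"
    and eig: "posterior_cov \<Sigma> (diag_mat c) (diag_mat s) *v x = \<mu> *s x"
  shows "\<Sigma> *v (x - \<mu> *s (diag_mat (\<chi> j. (c $ j)\<^sup>2 / s $ j) *v x)) = \<mu> *s x"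
proof -
  have "invertible (diag_mat c ** \<Sigma> ** transpose (diag_mat c) + diag_mat s)"
    by (intro pos_def_invertible innovation_cov_pos_def \<Sigma> pos_def_diag_mat s)
  then obtain w
    where Sb: "posterior_cov \<Sigma> (diag_mat c) (diag_mat s) *v x = \<Sigma> *v (x - transpose (diag_mat c) *v w)"
      and Vw: "diag_mat s *v w = diag_mat c *v (posterior_cov \<Sigma> (diag_mat c) (diag_mat s) *v x)"
    using posterior_cov_factor by blast
  have "s $ j * w $ j = \<mu> * (c $ j * x $ j)" for j
    using arg_cong[OF Vw, of "\<lambda>v. v $ j"] eig by (simp add: diag_mat_vector_nth)
  then have "w $ j = \<mu> * (c $ j * x $ j) / s $ j" for j
    using s[of j] by (simp add: field_simps)
  then have "transpose (diag_mat c) *v w = \<mu> *s (diag_mat (\<chi> j. (c $ j)\<^sup>2 / s $ j) *v x)"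
    using s by (simp add: vec_eq_iff transpose_diag_mat diag_mat_vector_nth field_simps power2_eq_square
        del: transpose_matrix_vector)
  then show ?thesis using Sb eig by simp
qed

lemma posterior_cov_diag_eigenvalue_bounds:
  fixes \<Sigma> :: "real^'n^'n" and c s :: "real^'n"
  assumes \<Sigma>: "pos_semidef \<Sigma>" and s: "\<And>j. 0 < s $ j"
    and coercive: "\<And>y. \<gamma> * (y \<bullet> y) \<le> y \<bullet> (\<Sigma> *v y)" and "0 < \<gamma>"
    and a: "\<And>j. a \<le> (c $ j)\<^sup>2 / s $ j" and "0 < a" and b: "\<And>j. (c $ j)\<^sup>2 / s $ j \<le> b"
    and "is_eigenvalue (posterior_cov \<Sigma> (diag_mat c) (diag_mat s)) \<mu>"
  shows "1 / (b + 1 / \<gamma>) \<le> \<mu> \<and> \<mu> \<le> 1 / a"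
proof -
  obtain x where "x \<noteq> 0" and eig: "posterior_cov \<Sigma> (diag_mat c) (diag_mat s) *v x = \<mu> *s x"
    using assms(8) by (auto simp: is_eigenvalue_def)
  have "0 \<le> \<mu> * (x \<bullet> x)"
    using posterior_cov_pos_semidef[OF \<Sigma> pos_def_diag_mat[OF s]] eig
    by (metis pos_semidef_def inner_scaleR_right scalar_mult_eq_scaleR)
  moreover have "0 < x \<bullet> x" using \<open>x \<noteq> 0\<close> by simp
  ultimately have "0 \<le> \<mu>" by (simp add: zero_le_mult_iff)
  note eq = posterior_cov_diag_eigen_equation[OF \<Sigma> s eig]
  have "\<mu> * a \<le> 1"
    using \<Sigma> by (intro eigen_equation_upper_bound[OF _ eq \<open>0 \<le> \<mu>\<close> \<open>x \<noteq> 0\<close>] inner_diag_mat_ge)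
      (auto simp: pos_semidef_def a)
  moreover have "1 \<le> \<mu> * (b + 1 / \<gamma>)"
    by (intro eigen_equation_lower_bound[OF coercive \<open>0 < \<gamma>\<close> eq \<open>0 \<le> \<mu>\<close> \<open>x \<noteq> 0\<close>] inner_diag_mat_le)
      (simp add: b)
  moreover have "0 < b + 1 / \<gamma>"
    using order_trans[OF a b] \<open>0 < a\<close> \<open>0 < \<gamma>\<close> by (simp add: add_pos_pos)
  ultimately show ?thesis using \<open>0 < a\<close> by (simp add: field_simps)
qed

lemma ln_bounds_of_power_bounds:
  fixes d k m :: real
  assumes "0 < k" "k ^ n \<le> d" "d \<le> m ^ n"
  shows "real n * ln k \<le> ln d \<and> ln d \<le> real n * ln m"
proof -
  have "0 < d" using assms(1,2) by (meson zero_less_power less_le_trans)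
  then show ?thesis
    using assms by (metis ln_le_cancel_iff ln_realpow zero_less_power less_le_trans)
qed

theorem theorem6:
  fixes A W \<Sigma> :: "real^'n^'n" and c \<sigma> :: "real^'n" and l u :: 'n
  assumes W_pd: "pos_def W"
    and c_pos: "\<forall>j. c $ j > 0"
    and \<sigma>_pos: "\<forall>j. \<sigma> $ j > 0"
    and \<Sigma>_psd: "pos_semidef \<Sigma>"
    and DARE: "let C = diag_mat c; V = diag_mat (\<chi> j. (\<sigma> $ j)^2) in
      \<Sigma> = A ** \<Sigma> ** transpose A
          - A ** \<Sigma> ** transpose C ** matrix_inv (C ** \<Sigma> ** transpose C + V) ** C ** \<Sigma> ** transpose A
          + W"
    and l_min: "\<forall>j. (c $ l)^2 / (\<sigma> $ l)^2 \<le> (c $ j)^2 / (\<sigma> $ j)^2"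
    and u_max: "\<forall>j. (c $ j)^2 / (\<sigma> $ j)^2 \<le> (c $ u)^2 / (\<sigma> $ u)^2"
  shows "let C = diag_mat c; V = diag_mat (\<chi> j. (\<sigma> $ j)^2);
             \<Sigma>bar = \<Sigma> - \<Sigma> ** transpose C ** matrix_inv (C ** \<Sigma> ** transpose C + V) ** C ** \<Sigma>;
             n = real CARD('n)
         in n * ln ((\<sigma> $ u)^2 / ((c $ u)^2 + (\<sigma> $ u)^2 / min_eigenvalue W)) \<le> ln (det \<Sigma>bar)
          \<and> ln (det \<Sigma>bar) \<le> n * ln ((\<sigma> $ l)^2 / (c $ l)^2)"
proof -
  define s where "s = (\<chi> j. (\<sigma> $ j)^2)"
  define \<Sigma>bar where "\<Sigma>bar = posterior_cov \<Sigma> (diag_mat c) (diag_mat s)"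
  define \<gamma> where "\<gamma> = min_eigenvalue W"
  have s: "0 < s $ j" for j using \<sigma>_pos[rule_format, of j] by (simp add: s_def)
  have "0 < \<gamma>" using W_pd by (simp add: \<gamma>_def pos_def_min_eigenvalue_pos)
  have coercive: "\<gamma> * (y \<bullet> y) \<le> y \<bullet> (\<Sigma> *v y)" for y
    using min_eigenvalue_le_quadratic_form[of W y] W_pd
      riccati_quadratic_form_ge[OF \<Sigma>_psd pos_def_diag_mat[OF s] DARE[unfolded Let_def s_def[symmetric]]]
    unfolding \<gamma>_def pos_def_def by (blast intro: order_trans)
  define a where "a = (c $ l)^2 / s $ l"
  define b where "b = (c $ u)^2 / s $ u"
  have "0 < a" "0 < b" using c_pos[rule_format, of l] c_pos[rule_format, of u] s by (simp_all add: a_def b_def)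
  have "1 / (b + 1 / \<gamma>) \<le> \<mu> \<and> \<mu> \<le> 1 / a" if "is_eigenvalue \<Sigma>bar \<mu>" for \<mu>
    using l_min u_max \<open>0 < a\<close> that unfolding \<Sigma>bar_def
    by (intro posterior_cov_diag_eigenvalue_bounds[OF \<Sigma>_psd s coercive \<open>0 < \<gamma>\<close>])
      (auto simp: a_def b_def s_def)
  then have "(1 / (b + 1 / \<gamma>)) ^ CARD('n) \<le> det \<Sigma>bar \<and> det \<Sigma>bar \<le> (1 / a) ^ CARD('n)"
    using posterior_cov_pos_semidef[OF \<Sigma>_psd pos_def_diag_mat[OF s]] \<open>0 < b\<close> \<open>0 < \<gamma>\<close>
    by (intro det_bounds_of_eigenvalue_bounds) (auto simp: \<Sigma>bar_def pos_semidef_def)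
  then have "real CARD('n) * ln (1 / (b + 1 / \<gamma>)) \<le> ln (det \<Sigma>bar)
      \<and> ln (det \<Sigma>bar) \<le> real CARD('n) * ln (1 / a)"
    using \<open>0 < b\<close> \<open>0 < \<gamma>\<close> by (intro ln_bounds_of_power_bounds) (auto intro: add_pos_pos)
  moreover have "(\<sigma> $ u)^2 / ((c $ u)^2 + (\<sigma> $ u)^2 / \<gamma>) = 1 / (b + 1 / \<gamma>)"
    using s[of u] by (simp add: b_def s_def field_simps)
  moreover have "(\<sigma> $ l)^2 / (c $ l)^2 = 1 / a" by (simp add: a_def s_def)
  ultimately show ?thesis
    unfolding Let_def \<gamma>_def[symmetric] s_def[symmetric]
    by (simp add: \<Sigma>bar_def posterior_cov_def)
qed

end
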